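(* Let $\mathcal{SP}$ be the gap-insertion operad of set partitions and $\mathcal{NCP}\subset\mathcal{SP}$ its sub-operad of noncrossing partitions (defined in the context). Then the inclusion $i:\mathcal{NCP}\to\mathcal{SP}$ and the noncrossing closure $\operatorname{nc}:\mathcal{SP}\to\mathcal{NCP}$ are both morphisms of operads, and $\operatorname{nc}\circ i=\operatorname{Id}$, exhibiting $\mathcal{NCP}$ as a retract of $\mathcal{SP}$.
   Context: A partition of degree $n$ is a set partition of $[n]=\{1,\dots,n\}$ into nonempty blocks (for $n=0$ only the empty partition $\emptyset$); partitions of other finite linearly ordered sets are identified with partitions of $[n]$ via the order-preserving bijection. A partition is noncrossing if there are no $a<c<b<d$ with $a,b$ in one block and $c,d$ in a different block. Partitions of $[n]$ are ordered by refinement ($P\leq Q$ if every block of $Q$ is a union of blocks of $P$). The noncrossing closure $\operatorname{nc}(P)$ of a partition $P$ of $[n]$ is the finest noncrossing partition $Q$ of $[n]$ with $P\leq Q$. The gap-insertion operad $\mathcal{SP}$ is the non-symmetric set operad with $\mathcal{SP}(0)=\emptyset$ and, for $n\geq 1$, $\mathcal{SP}(n)$ the set of partitions of $[n-1]$ ($\mathcal{SP}(1)=\{\emptyset\}$, the unit). The partial composition, for $P=\{\pi_1,\dots,\pi_k\}\in\mathcal{SP}(m)$, $Q=\{\rho_1,\dots,\rho_l\}\in\mathcal{SP}(n)$, $i\in[m]$, is $P\diamond_i Q=\{\chi(\pi_1),\dots,\chi(\pi_k),\rho_1+i-1,\dots,\rho_l+i-1\}$ with $\chi(p)=p$ if $p<i$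 and $\chi(p)=p+n-1$ otherwise (insertion of $Q$ into the $i$-th gap of $P$). The noncrossing partitions form a sub-operad $\mathcal{NCP}$. *)

theory Defs
  imports Main
begin

definition is_partition :: "nat \<Rightarrow> nat set set \<Rightarrow> bool" where
  "is_partition n P \<longleftrightarrow>
     (\<forall>B\<in>P. B \<noteq> {}) \<and>
     (\<forall>B\<in>P. \<forall>C\<in>P. B \<noteq> C \<longrightarrow> B \<inter> C = {}) \<and>
     \<Union>P = {1..n}"

definition noncrossing :: "nat set set \<Rightarrow> bool" where
  "noncrossing P \<longleftrightarrow>
     \<not> (\<exists>B1\<in>P. \<exists>B2\<in>P. B1 \<noteq> B2 \<and>
          (\<exists>a b c d. a < c \<and> c < b \<and> b < d \<and> a \<in> B1 \<and> b \<in> B1 \<and> c \<in> B2 \<and> d \<in> B2))"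

definition refines :: "nat set set \<Rightarrow> nat set set \<Rightarrow> bool" where
  "refines P Q \<longleftrightarrow> (\<forall>B\<in>Q. \<exists>S\<subseteq>P. B = \<Union>S)"

definition nc :: "nat \<Rightarrow> nat set set \<Rightarrow> nat set set" where
  "nc n P = (THE Q. is_partition n Q \<and> noncrossing Q \<and> refines P Q \<and>
      (\<forall>Q'. is_partition n Q' \<and> noncrossing Q' \<and> refines P Q' \<longrightarrow> refines Q Q'))"

definition SP :: "nat \<Rightarrow> nat set set set" where
  "SP m = {P. 1 \<le> m \<and> is_partition (m - 1) P}"

definition NCP :: "nat \<Rightarrow> nat set set set" where
  "NCP m = {P \<in> SP m. noncrossing P}"

definition SP_unit :: "nat set set" where
  "SP_unit = {}"

text \<open>Partial composition P \<diamond>_i Q for Q \<in> SP(n): insertion of Q into the i-th gap of P.\<close>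
definition SP_comp :: "nat set set \<Rightarrow> nat \<Rightarrow> nat \<Rightarrow> nat set set \<Rightarrow> nat set set" where
  "SP_comp P i n Q =
     (\<lambda>B. (\<lambda>p. if p < i then p else p + n - 1) ` B) ` P \<union>
     (\<lambda>B. (\<lambda>r. r + i - 1) ` B) ` Q"

definition nc_op :: "nat \<Rightarrow> nat set set \<Rightarrow> nat set set" where
  "nc_op m P = nc (m - 1) P"

end

theory Submission
  imports Defs "HOL-Library.Disjoint_Sets"
begin

text \<open>
  The noncrossing closure of a partition P is the common refinement (the meet) of all noncrossing
  partitions coarser than P. A meet of noncrossing partitions is again noncrossing: two crossing
  blocks of the meet lie in crossing, hence equal, blocks of every member, so they coincide.

  The composite P \<diamond>_i Q is the union of the image of P under an order embedding f onto the
  complement of an interval and the image of Q under an order embedding g onto that interval.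
  A block inside the interval cannot cross a block outside it, so composites of noncrossing
  partitions are noncrossing. A partition R of the composite set is coarser than P \<diamond>_i Q iff
  the pullbacks of R along f and g are coarser than P and Q, and these pullbacks are noncrossing
  when R is. Hence the noncrossing coarsenings of P \<diamond>_i Q are exactly those coarser than
  nc P \<diamond>_i nc Q, which is therefore the finest one.
\<close>

lemma is_partition_iff_partition_on: "is_partition n P \<longleftrightarrow> partition_on {1..n} P"
  unfolding is_partition_def partition_on_def disjoint_def by auto

text \<open>
  Unqualified \<^const>\<open>refines\<close> is the refinement relation of \<^theory>\<open>HOL-Library.Disjoint_Sets\<close>
  (with explicit ground set and both arguments partitions of it); the order of the operad
  definitions is \<^const>\<open>Defs.refines\<close>.
\<close>

lemma Defs_refines_iff_refines:
  assumes P: "partition_on A P" and Q: "partition_on A Q"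
  shows "Defs.refines P Q \<longleftrightarrow> refines A P Q"
proof
  assume unions: "Defs.refines P Q"
  have "\<exists>Y\<in>Q. X \<subseteq> Y" if X: "X \<in> P" for X
  proof -
    obtain x where x: "x \<in> X"
      using X partition_onD3[OF P] by (metis ex_in_conv)
    have "\<Union>P = \<Union>Q"
      using partition_onD1[OF P] partition_onD1[OF Q] by simp
    then obtain Y where Y: "Y \<in> Q" "x \<in> Y"
      using X x by blast
    then obtain S where S: "S \<subseteq> P" "Y = \<Union>S"
      using unions unfolding Defs.refines_def by blast
    then obtain X' where X': "X' \<in> P" "x \<in> X'" "X' \<subseteq> Y"
      using Y(2) by blast
    then have "X' = X"
      using disjointD[OF partition_onD2[OF P] X'(1) X] x by blast
    then show ?thesis
      using X'(3) Y(1) by blast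
  qed
  then show "refines A P Q"
    unfolding refines_def using P Q by blast
next
  assume "refines A P Q"
  then have "Y = \<Union>{X \<in> P. X \<subseteq> Y}" if "Y \<in> Q" for Y
    using partition_onD1[OF refines_obtains_subset] that by blast
  then show "Defs.refines P Q"
    unfolding Defs.refines_def by (metis (no_types, lifting) mem_Collect_eq subsetI)
qed

lemma noncrossingI:
  assumes "\<And>B1 B2 a b c d. B1 \<in> P \<Longrightarrow> B2 \<in> P \<Longrightarrow> a < c \<Longrightarrow> c < b \<Longrightarrow> b < d \<Longrightarrow>
    a \<in> B1 \<Longrightarrow> b \<in> B1 \<Longrightarrow> c \<in> B2 \<Longrightarrow> d \<in> B2 \<Longrightarrow> B1 = B2"
  shows "noncrossing P"
  unfolding noncrossing_def
proof (intro notI, elim bexE exE conjE)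
  fix B1 B2 a b c d
  assume "B1 \<in> P" "B2 \<in> P" "B1 \<noteq> B2" "a < c" "c < b" "b < d"
    "a \<in> B1" "b \<in> B1" "c \<in> B2" "d \<in> B2"
  then show False
    using assms by blast
qed

lemma noncrossingD:
  assumes "noncrossing P" "B1 \<in> P" "B2 \<in> P" "a < c" "c < b" "b < d"
    "a \<in> B1" "b \<in> B1" "c \<in> B2" "d \<in> B2"
  shows "B1 = B2"
proof (rule ccontr)
  assume "B1 \<noteq> B2"
  with assms(2-) have "\<exists>B1\<in>P. \<exists>B2\<in>P. B1 \<noteq> B2 \<and>
      (\<exists>a b c d. a < c \<and> c < b \<and> b < d \<and> a \<in> B1 \<and> b \<in> B1 \<and> c \<in> B2 \<and> d \<in> B2)"
    by (intro bexI[of _ B1] bexI[of _ B2] conjI exI[of _ a] exI[of _ b] exI[of _ c] exI[of _ d])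
  with assms(1) show False
    unfolding noncrossing_def by contradiction
qed

lemma noncrossing_common_refinement:
  assumes "\<And>Q. Q \<in> \<Q> \<Longrightarrow> noncrossing Q"
  shows "noncrossing (common_refinement \<Q>)"
proof (rule noncrossingI)
  fix B1 B2 a b c d
  assume "B1 \<in> common_refinement \<Q>" "B2 \<in> common_refinement \<Q>"
    and order: "a < c" "c < b" "b < d"
    and mem: "a \<in> B1" "b \<in> B1" "c \<in> B2" "d \<in> B2"
  then obtain F G where F: "F \<in> (\<Pi> Q\<in>\<Q>. Q)" "B1 = \<Inter>(F ` \<Q>)"
    and G: "G \<in> (\<Pi> Q\<in>\<Q>. Q)" "B2 = \<Inter>(G ` \<Q>)"
    unfolding common_refinement by blast
  have "F Q = G Q" if "Q \<in> \<Q>" for Q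
  proof (rule noncrossingD[OF assms[OF that] _ _ order])
    show "F Q \<in> Q" "G Q \<in> Q"
      using F(1) G(1) that by auto
    show "a \<in> F Q" "b \<in> F Q" "c \<in> G Q" "d \<in> G Q"
      using F(2) G(2) mem that by auto
  qed
  then show "B1 = B2"
    using F(2) G(2) by simp
qed

lemma partition_on_coarsest: "partition_on A ({A} - {{}})"
  by (cases "A = {}") (simp_all add: partition_on_empty partition_on_space)

lemma noncrossing_coarsest: "noncrossing ({A} - {{}})"
  by (rule noncrossingI) simp

lemma refines_coarsest:
  assumes "partition_on A P"
  shows "refines A P ({A} - {{}})"
  unfolding refines_def
proof (intro conjI ballI assms partition_on_coarsest)
  fix X
  assume "X \<in> P"
  then have "X \<subseteq> A" "X \<noteq> {}"
    using partition_onD1[OF assms] partition_onD3[OF assms] by auto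
  then show "\<exists>Y\<in>{A} - {{}}. X \<subseteq> Y"
    by auto
qed

lemma is_partition_refines_iff:
  assumes "partition_on {1..n} P"
  shows "is_partition n Q \<and> Defs.refines P Q \<longleftrightarrow> refines {1..n} P Q"
  using assms Defs_refines_iff_refines is_partition_iff_partition_on refines_def by blast

lemma nc_eqI:
  assumes coarser: "refines {1..n} P Q" and noncrossing: "noncrossing Q"
    and finest: "\<And>R. refines {1..n} P R \<Longrightarrow> noncrossing R \<Longrightarrow> refines {1..n} Q R"
  shows "nc n P = Q"
proof -
  have P: "partition_on {1..n} P" and Q: "partition_on {1..n} Q"
    using coarser unfolding refines_def by blast+
  show ?thesis
    unfolding nc_def
  proof (rule the_equality)
    have "Defs.refines Q R"
      if "is_partition n R" "noncrossing R" "Defs.refines P R" for R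
    proof -
      have "refines {1..n} P R"
        using is_partition_refines_iff[OF P] that by blast
      then show ?thesis
        using finest[OF _ that(2)] Defs_refines_iff_refines[OF Q] unfolding refines_def by blast
    qed
    then show "is_partition n Q \<and> noncrossing Q \<and> Defs.refines P Q \<and>
        (\<forall>R. is_partition n R \<and> noncrossing R \<and> Defs.refines P R \<longrightarrow> Defs.refines Q R)"
      using is_partition_refines_iff[OF P] coarser noncrossing by blast
  next
    fix Q'
    assume Q': "is_partition n Q' \<and> noncrossing Q' \<and> Defs.refines P Q' \<and>
        (\<forall>R. is_partition n R \<and> noncrossing R \<and> Defs.refines P R \<longrightarrow> Defs.refines Q' R)"
    have "refines {1..n} P Q'" "noncrossing Q'"
      using Q' is_partition_refines_iff[OF P] by blast+
    then have "refines {1..n} Q Q'"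
      by (rule finest)
    moreover have "refines {1..n} Q' Q"
      using Q' coarser noncrossing is_partition_refines_iff[OF P] Defs_refines_iff_refines[OF _ Q]
      unfolding is_partition_iff_partition_on by blast
    ultimately show "Q' = Q"
      using refines_asym[of "{1..n}" Q' Q] by blast
  qed
qed

lemma common_refinement_noncrossing_coarsenings:
  assumes P: "partition_on {1..n} P"
  defines "\<Q> \<equiv> {Q. refines {1..n} P Q \<and> noncrossing Q}"
  shows "refines {1..n} P (common_refinement \<Q>)"
    and "noncrossing (common_refinement \<Q>)"
    and "\<And>R. R \<in> \<Q> \<Longrightarrow> refines {1..n} (common_refinement \<Q>) R"
proof -
  have partitions: "partition_on {1..n} Q" if "Q \<in> \<Q>" for Q
    using that unfolding \<Q>_def refines_def by blast
  have "\<Q> \<noteq> {}"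
    using refines_coarsest[OF P] noncrossing_coarsest unfolding \<Q>_def by blast
  then show "refines {1..n} P (common_refinement \<Q>)"
    using common_refinement_coarsest[OF partitions P] unfolding \<Q>_def by blast
  show "noncrossing (common_refinement \<Q>)"
    by (rule noncrossing_common_refinement) (simp add: \<Q>_def)
  show "refines {1..n} (common_refinement \<Q>) R" if "R \<in> \<Q>" for R
    using refines_common_refinement[OF partitions that] .
qed

lemma nc_eq_common_refinement:
  assumes "partition_on {1..n} P"
  shows "nc n P = common_refinement {Q. refines {1..n} P Q \<and> noncrossing Q}"
  using common_refinement_noncrossing_coarsenings[OF assms] by (intro nc_eqI) auto

lemma
  assumes "partition_on {1..n} P"
  shows refines_nc: "refines {1..n} P (nc n P)"
    and noncrossing_nc: "noncrossing (nc n P)"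
  using common_refinement_noncrossing_coarsenings[OF assms]
  by (simp_all add: nc_eq_common_refinement[OF assms])

lemma nc_least:
  assumes "refines {1..n} P Q" "noncrossing Q"
  shows "refines {1..n} (nc n P) Q"
proof -
  have "partition_on {1..n} P"
    using assms(1) unfolding refines_def by blast
  then show ?thesis
    using common_refinement_noncrossing_coarsenings(3) assms
    by (simp add: nc_eq_common_refinement)
qed

lemma nc_noncrossing_eq:
  assumes "partition_on {1..n} P" "noncrossing P"
  shows "nc n P = P"
  using assms by (intro nc_eqI refines_refl) (simp_all add: refines_def)

lemma partition_on_Un:
  assumes "partition_on A P" "partition_on B Q" "A \<inter> B = {}"
  shows "partition_on (A \<union> B) (P \<union> Q)"
  using assms disjoint_union unfolding partition_on_def by auto

lemma partition_on_image:
  assumes P: "partition_on A P" and f: "inj_on f A"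
  shows "partition_on (f ` A) ((`) f ` P)"
proof -
  have "{} \<notin> (`) f ` P"
    using partition_onD3[OF P] by auto
  then show ?thesis
    using partition_on_inj_image[OF P f] by simp
qed

lemma noncrossing_image:
  assumes f: "strict_mono f" and P: "noncrossing P"
  shows "noncrossing ((`) f ` P)"
proof (rule noncrossingI)
  fix B1 B2 a b c d
  assume "B1 \<in> (`) f ` P" "B2 \<in> (`) f ` P" and order: "a < c" "c < b" "b < d"
    and mem: "a \<in> B1" "b \<in> B1" "c \<in> B2" "d \<in> B2"
  then obtain X1 X2 where X: "X1 \<in> P" "X2 \<in> P" "B1 = f ` X1" "B2 = f ` X2"
    by blast
  obtain a' where "a' \<in> X1" "a = f a'" using mem(1) X(3) by blast
  obtain b' where "b' \<in> X1" "b = f b'" using mem(2) X(3) by blast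
  obtain c' where "c' \<in> X2" "c = f c'" using mem(3) X(4) by blast
  obtain d' where "d' \<in> X2" "d = f d'" using mem(4) X(4) by blast
  have "a' < c'" "c' < b'" "b' < d'"
    using order strict_mono_less[OF f] \<open>a = f a'\<close> \<open>b = f b'\<close> \<open>c = f c'\<close> \<open>d = f d'\<close>
    by simp_all
  then have "X1 = X2"
    using noncrossingD[OF P X(1,2)] \<open>a' \<in> X1\<close> \<open>b' \<in> X1\<close> \<open>c' \<in> X2\<close> \<open>d' \<in> X2\<close> by blast
  then show "B1 = B2"
    using X(3,4) by simp
qed

lemma noncrossing_Un_interval:
  assumes "noncrossing P" "noncrossing Q"
    and outside: "\<Union>P \<inter> {u..v} = {}" and inside: "\<Union>Q \<subseteq> {u..v}"
  shows "noncrossing (P \<union> Q)"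
proof (rule noncrossingI)
  fix B1 B2 a b c d
  assume B: "B1 \<in> P \<union> Q" "B2 \<in> P \<union> Q" and order: "a < c" "c < b" "b < d"
    and mem: "a \<in> B1" "b \<in> B1" "c \<in> B2" "d \<in> B2"
  have "\<not> (B1 \<in> P \<and> B2 \<in> Q)"
  proof
    assume "B1 \<in> P \<and> B2 \<in> Q"
    then have "b \<in> \<Union>P" "c \<in> {u..v}" "d \<in> {u..v}"
      using mem inside by auto
    then show False
      using order outside by auto
  qed
  moreover have "\<not> (B1 \<in> Q \<and> B2 \<in> P)"
  proof
    assume "B1 \<in> Q \<and> B2 \<in> P"
    then have "c \<in> \<Union>P" "a \<in> {u..v}" "b \<in> {u..v}"
      using mem inside by auto
    then show False
      using order outside by auto
  qed
  ultimately have "B1 \<in> P \<and> B2 \<in> P \<or> B1 \<in> Q \<and> B2 \<in> Q"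
    using B by blast
  then show "B1 = B2"
    using noncrossingD[OF assms(1) _ _ order mem] noncrossingD[OF assms(2) _ _ order mem] by blast
qed

definition partition_pullback :: "('a \<Rightarrow> 'b) \<Rightarrow> 'a set \<Rightarrow> 'b set set \<Rightarrow> 'a set set" where
  "partition_pullback f A R = (\<lambda>Y. f -` Y \<inter> A) ` R - {{}}"

lemma partition_on_pullback:
  assumes R: "partition_on B R" and f: "f ` A \<subseteq> B"
  shows "partition_on A (partition_pullback f A R)"
proof -
  have "partition_on (f -` B \<inter> A) (partition_pullback f A R)"
    unfolding partition_pullback_def
    by (rule partition_on_transform[OF R]) (auto simp: disjnt_def)
  moreover have "f -` B \<inter> A = A"
    using f by blast
  ultimately show ?thesis
    by simp
qed

lemma noncrossing_pullback:
  assumes f: "strict_mono f" and R: "noncrossing R"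
  shows "noncrossing (partition_pullback f A R)"
proof (rule noncrossingI)
  fix B1 B2 a b c d
  assume "B1 \<in> partition_pullback f A R" "B2 \<in> partition_pullback f A R"
    and order: "a < c" "c < b" "b < d"
    and mem: "a \<in> B1" "b \<in> B1" "c \<in> B2" "d \<in> B2"
  then obtain Y1 Y2 where Y: "Y1 \<in> R" "Y2 \<in> R" "B1 = f -` Y1 \<inter> A" "B2 = f -` Y2 \<inter> A"
    unfolding partition_pullback_def by blast
  have "f a < f c" "f c < f b" "f b < f d"
    using order strict_mono_less[OF f] by simp_all
  moreover have "f a \<in> Y1" "f b \<in> Y1" "f c \<in> Y2" "f d \<in> Y2"
    using mem Y(3,4) by auto
  ultimately have "Y1 = Y2"
    by (rule noncrossingD[OF R Y(1,2)])
  then show "B1 = B2"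
    using Y(3,4) by simp
qed

lemma refines_pullback_iff:
  assumes P: "partition_on A P" and R: "partition_on B R" and f: "f ` A \<subseteq> B"
  shows "refines A P (partition_pullback f A R) \<longleftrightarrow> (\<forall>X\<in>P. \<exists>Y\<in>R. f ` X \<subseteq> Y)"
proof
  assume refines: "refines A P (partition_pullback f A R)"
  show "\<forall>X\<in>P. \<exists>Y\<in>R. f ` X \<subseteq> Y"
  proof
    fix X
    assume "X \<in> P"
    then obtain Z where "Z \<in> partition_pullback f A R" "X \<subseteq> Z"
      using refines unfolding refines_def by blast
    then obtain Y where "Y \<in> R" "X \<subseteq> f -` Y \<inter> A"
      unfolding partition_pullback_def by blast
    then show "\<exists>Y\<in>R. f ` X \<subseteq> Y"
      by blast
  qed
next
  assume images: "\<forall>X\<in>P. \<exists>Y\<in>R. f ` X \<subseteq> Y"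
  have "\<exists>Z\<in>partition_pullback f A R. X \<subseteq> Z" if X: "X \<in> P" for X
  proof -
    obtain Y where "Y \<in> R" "f ` X \<subseteq> Y"
      using images X by blast
    moreover have "X \<subseteq> A" "X \<noteq> {}"
      using X partition_onD1[OF P] partition_onD3[OF P] by auto
    ultimately have "X \<subseteq> f -` Y \<inter> A" "f -` Y \<inter> A \<in> partition_pullback f A R"
      unfolding partition_pullback_def by auto
    then show ?thesis
      by blast
  qed
  then show "refines A P (partition_pullback f A R)"
    unfolding refines_def using P partition_on_pullback[OF R f] by blast
qed

lemma refines_image_blocks:
  assumes "refines A P P'" "Z \<in> (`) f ` P"
  shows "\<exists>W\<in>(`) f ` P'. Z \<subseteq> W"
proof -
  obtain X where "X \<in> P" "Z = f ` X"
    using assms(2) by blast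
  moreover obtain X' where "X' \<in> P'" "X \<subseteq> X'"
    using assms(1) \<open>X \<in> P\<close> unfolding refines_def by blast
  ultimately show ?thesis
    by (intro bexI[of _ "f ` X'"]) auto
qed

locale gap_insertion =
  fixes f g :: "nat \<Rightarrow> nat" and k l N u v :: nat
  assumes strict_mono_f: "strict_mono f" and strict_mono_g: "strict_mono g"
    and image_f: "f ` {1..k} = {1..N} - {u..v}"
    and image_g: "g ` {1..l} = {u..v}"
    and interval_subset: "{u..v} \<subseteq> {1..N}"
begin

lemma partition_on_insertion:
  assumes "partition_on {1..k} P" "partition_on {1..l} Q"
  shows "partition_on {1..N} ((`) f ` P \<union> (`) g ` Q)"
proof -
  have "partition_on (f ` {1..k} \<union> g ` {1..l}) ((`) f ` P \<union> (`) g ` Q)"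
    using assms strict_mono_f strict_mono_g image_f image_g
    by (intro partition_on_Un partition_on_image) (auto intro: strict_mono_imp_inj_on)
  moreover have "f ` {1..k} \<union> g ` {1..l} = {1..N}"
    using image_f image_g interval_subset by blast
  ultimately show ?thesis
    by simp
qed

lemma noncrossing_insertion:
  assumes "partition_on {1..k} P" "partition_on {1..l} Q" "noncrossing P" "noncrossing Q"
  shows "noncrossing ((`) f ` P \<union> (`) g ` Q)"
proof (rule noncrossing_Un_interval)
  show "noncrossing ((`) f ` P)" "noncrossing ((`) g ` Q)"
    using assms strict_mono_f strict_mono_g noncrossing_image by blast+
  show "\<Union>((`) f ` P) \<inter> {u..v} = {}"
    using partition_onD1[OF assms(1)] image_f by blast
  show "\<Union>((`) g ` Q) \<subseteq> {u..v}"
    using partition_onD1[OF assms(2)] image_g by blast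
qed

lemma insertion_refines_iff:
  assumes P: "partition_on {1..k} P" and Q: "partition_on {1..l} Q" and R: "partition_on {1..N} R"
  shows "refines {1..N} ((`) f ` P \<union> (`) g ` Q) R \<longleftrightarrow>
    refines {1..k} P (partition_pullback f {1..k} R) \<and> refines {1..l} Q (partition_pullback g {1..l} R)"
proof -
  have f_range: "f ` {1..k} \<subseteq> {1..N}" and g_range: "g ` {1..l} \<subseteq> {1..N}"
    using image_f image_g interval_subset by auto
  have "refines {1..k} P (partition_pullback f {1..k} R) \<longleftrightarrow> (\<forall>X\<in>P. \<exists>Y\<in>R. f ` X \<subseteq> Y)"
    by (rule refines_pullback_iff[OF P R f_range])
  moreover have "refines {1..l} Q (partition_pullback g {1..l} R) \<longleftrightarrow> (\<forall>X\<in>Q. \<exists>Y\<in>R. g ` X \<subseteq> Y)"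
    by (rule refines_pullback_iff[OF Q R g_range])
  moreover have "refines {1..N} ((`) f ` P \<union> (`) g ` Q) R \<longleftrightarrow>
      (\<forall>X\<in>P. \<exists>Y\<in>R. f ` X \<subseteq> Y) \<and> (\<forall>X\<in>Q. \<exists>Y\<in>R. g ` X \<subseteq> Y)"
    using partition_on_insertion[OF P Q] R by (auto simp: refines_def)
  ultimately show ?thesis
    by simp
qed

lemma insertion_mono:
  assumes "refines {1..k} P P'" "refines {1..l} Q Q'"
  shows "refines {1..N} ((`) f ` P \<union> (`) g ` Q) ((`) f ` P' \<union> (`) g ` Q')"
  unfolding refines_def
proof (intro conjI ballI)
  show "partition_on {1..N} ((`) f ` P \<union> (`) g ` Q)"
    using assms by (intro partition_on_insertion) (simp_all add: refines_def)
  show "partition_on {1..N} ((`) f ` P' \<union> (`) g ` Q')"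
    using assms by (intro partition_on_insertion) (simp_all add: refines_def)
  fix Z
  assume "Z \<in> (`) f ` P \<union> (`) g ` Q"
  then show "\<exists>W\<in>(`) f ` P' \<union> (`) g ` Q'. Z \<subseteq> W"
  proof
    assume "Z \<in> (`) f ` P"
    from refines_image_blocks[OF assms(1) this] show ?thesis
      by blast
  next
    assume "Z \<in> (`) g ` Q"
    from refines_image_blocks[OF assms(2) this] show ?thesis
      by blast
  qed
qed

lemma nc_insertion:
  assumes P: "partition_on {1..k} P" and Q: "partition_on {1..l} Q"
  shows "nc N ((`) f ` P \<union> (`) g ` Q) = (`) f ` nc k P \<union> (`) g ` nc l Q"
proof (rule nc_eqI)
  have ncP: "partition_on {1..k} (nc k P)" and ncQ: "partition_on {1..l} (nc l Q)"
    using refines_nc[OF P] refines_nc[OF Q] unfolding refines_def by blast+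
  show "noncrossing ((`) f ` nc k P \<union> (`) g ` nc l Q)"
    using noncrossing_insertion[OF ncP ncQ noncrossing_nc[OF P] noncrossing_nc[OF Q]] .
  show "refines {1..N} ((`) f ` P \<union> (`) g ` Q) ((`) f ` nc k P \<union> (`) g ` nc l Q)"
    using insertion_mono[OF refines_nc[OF P] refines_nc[OF Q]] .
  fix R
  assume coarser: "refines {1..N} ((`) f ` P \<union> (`) g ` Q) R" and "noncrossing R"
  then have R: "partition_on {1..N} R"
    unfolding refines_def by blast
  have P_pullback: "refines {1..k} P (partition_pullback f {1..k} R)"
    and Q_pullback: "refines {1..l} Q (partition_pullback g {1..l} R)"
    using coarser unfolding insertion_refines_iff[OF P Q R] by blast+
  have "refines {1..k} (nc k P) (partition_pullback f {1..k} R)"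
    by (rule nc_least[OF P_pullback noncrossing_pullback[OF strict_mono_f \<open>noncrossing R\<close>]])
  moreover have "refines {1..l} (nc l Q) (partition_pullback g {1..l} R)"
    by (rule nc_least[OF Q_pullback noncrossing_pullback[OF strict_mono_g \<open>noncrossing R\<close>]])
  ultimately show "refines {1..N} ((`) f ` nc k P \<union> (`) g ` nc l Q) R"
    unfolding insertion_refines_iff[OF ncP ncQ R] by blast
qed

end

lemma gap_insertion_SP_comp:
  assumes "1 \<le> i" "i \<le> m" "1 \<le> n"
  shows "gap_insertion (\<lambda>p. if p < i then p else p + n - 1) (\<lambda>r. r + i - 1)
    (m - 1) (n - 1) (m + n - 1 - 1) i (i + n - 2)"
proof
  let ?f = "\<lambda>p. if p < i then p else p + n - 1" and ?g = "\<lambda>r. r + i - 1"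
  show "strict_mono ?f" "strict_mono ?g"
    using assms by (auto intro!: strict_monoI)
  show "{i..i + n - 2} \<subseteq> {1..m + n - 1 - 1}"
    using assms by auto
  have "?g ` {1..n - 1} = (\<lambda>r. r + (i - 1)) ` {1..n - 1}"
    using assms by (intro image_cong) auto
  also have "\<dots> = {1 + (i - 1)..n - 1 + (i - 1)}"
    by (rule image_add_atLeastAtMost')
  also have "\<dots> = {i..i + n - 2}"
    using assms by (intro arg_cong2[where f = atLeastAtMost]) auto
  finally show "?g ` {1..n - 1} = {i..i + n - 2}" .
  show "?f ` {1..m - 1} = {1..m + n - 1 - 1} - {i..i + n - 2}"
  proof (intro equalityI subsetI)
    fix x
    assume "x \<in> ?f ` {1..m - 1}"
    then show "x \<in> {1..m + n - 1 - 1} - {i..i + n - 2}"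
      using assms by auto
  next
    fix x
    assume x: "x \<in> {1..m + n - 1 - 1} - {i..i + n - 2}"
    show "x \<in> ?f ` {1..m - 1}"
    proof (cases "x < i")
      case True
      then have "x = ?f x" "x \<in> {1..m - 1}"
        using x assms by auto
      then show ?thesis
        by (rule image_eqI)
    next
      case False
      then have "x = ?f (x - (n - 1))" "x - (n - 1) \<in> {1..m - 1}"
        using x assms by auto
      then show ?thesis
        by (rule image_eqI)
    qed
  qed
qed

lemma mem_SP_iff: "P \<in> SP m \<longleftrightarrow> 1 \<le> m \<and> partition_on {1..m - 1} P"
  unfolding SP_def is_partition_iff_partition_on by simp

lemma mem_NCP_iff: "P \<in> NCP m \<longleftrightarrow> 1 \<le> m \<and> partition_on {1..m - 1} P \<and> noncrossing P"
  unfolding NCP_def mem_SP_iff by simp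

lemma SP_unit_mem_NCP: "SP_unit \<in> NCP 1"
  by (simp add: mem_NCP_iff SP_unit_def partition_on_empty noncrossing_def)

lemma nc_op_mem_NCP: "P \<in> SP m \<Longrightarrow> nc_op m P \<in> NCP m"
  using refines_nc noncrossing_nc unfolding mem_SP_iff mem_NCP_iff nc_op_def refines_def by blast

lemma nc_op_NCP: "P \<in> NCP m \<Longrightarrow> nc_op m P = P"
  by (simp add: mem_NCP_iff nc_op_def nc_noncrossing_eq)

lemma SP_comp_mem_NCP:
  assumes "P \<in> NCP m" "Q \<in> NCP n" "1 \<le> i" "i \<le> m"
  shows "SP_comp P i n Q \<in> NCP (m + n - 1)"
proof -
  have P: "partition_on {1..m - 1} P" "noncrossing P" and Q: "partition_on {1..n - 1} Q" "noncrossing Q"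
    and "1 \<le> n"
    using assms(1,2) by (simp_all add: mem_NCP_iff)
  then interpret gap_insertion "\<lambda>p. if p < i then p else p + n - 1" "\<lambda>r. r + i - 1"
    "m - 1" "n - 1" "m + n - 1 - 1" i "i + n - 2"
    using assms(3,4) by (intro gap_insertion_SP_comp)
  show ?thesis
    unfolding mem_NCP_iff SP_comp_def
    using partition_on_insertion[OF P(1) Q(1)] noncrossing_insertion[OF P(1) Q(1) P(2) Q(2)]
      assms(3,4) \<open>1 \<le> n\<close>
    by simp
qed

lemma nc_op_SP_comp:
  assumes "P \<in> SP m" "Q \<in> SP n" "1 \<le> i" "i \<le> m"
  shows "nc_op (m + n - 1) (SP_comp P i n Q) = SP_comp (nc_op m P) i n (nc_op n Q)"
proof -
  have P: "partition_on {1..m - 1} P" and Q: "partition_on {1..n - 1} Q" and "1 \<le> n"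
    using assms(1,2) by (simp_all add: mem_SP_iff)
  then interpret gap_insertion "\<lambda>p. if p < i then p else p + n - 1" "\<lambda>r. r + i - 1"
    "m - 1" "n - 1" "m + n - 1 - 1" i "i + n - 2"
    using assms(3,4) by (intro gap_insertion_SP_comp)
  show ?thesis
    unfolding nc_op_def SP_comp_def by (rule nc_insertion[OF P Q])
qed

theorem mainTheorem2:
  shows
    \<comment> \<open>the inclusion i : NCP \<rightarrow> SP is a morphism of operads (NCP contains the unit
        and is closed under the partial compositions of SP)\<close>
    "(SP_unit \<in> NCP 1 \<and>
      (\<forall>m n i P Q. P \<in> NCP m \<and> Q \<in> NCP n \<and> 1 \<le> i \<and> i \<le> m \<longrightarrow>
          SP_comp P i n Q \<in> NCP (m + n - 1)))
   \<and>
    \<comment> \<open>nc : SP \<rightarrow> NCP is a morphism of operads\<close>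
    ((\<forall>m P. P \<in> SP m \<longrightarrow> nc_op m P \<in> NCP m) \<and>
     nc_op 1 SP_unit = SP_unit \<and>
     (\<forall>m n i P Q. P \<in> SP m \<and> Q \<in> SP n \<and> 1 \<le> i \<and> i \<le> m \<longrightarrow>
          nc_op (m + n - 1) (SP_comp P i n Q) = SP_comp (nc_op m P) i n (nc_op n Q)))
   \<and>
    \<comment> \<open>nc \<circ> i = Id\<close>
    (\<forall>m P. P \<in> NCP m \<longrightarrow> nc_op m P = P)"
proof (intro conjI allI impI)
  show "SP_unit \<in> NCP 1"
    by (rule SP_unit_mem_NCP)
  show "nc_op 1 SP_unit = SP_unit"
    by (rule nc_op_NCP[OF SP_unit_mem_NCP])
qed (rule SP_comp_mem_NCP nc_op_mem_NCP nc_op_NCP nc_op_SP_comp; simp)+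

end
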